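(* Suppose no agent is faulty ($f=0$), the directed graph $G=(\mathcal{V},\mathcal{E})$ on $\mathcal{V}=\{1,\dots,n\}$ is strongly connected, and for every $\theta\neq\theta^*$, $$\sum_{j=1}^{n}D\big(\ell_j(\cdot\mid\theta^* )\,\|\,\ell_j(\cdot\mid\theta)\big)\neq0 .$$ If every agent runs Failure-free BFL, then for every agent $i$ and every $\theta\neq\theta^*$, $\mu_t^i(\theta)\to0$ almost surely as $t\to\infty$.
   Context: Finite hypothesis set $\Theta=\{\theta_1,\dots,\theta_m\}$, unknown true state $\theta^*\in\Theta$. Agent $i$ has finite signal space $\mathcal{S}_i$ and known likelihoods $\ell_i(\cdot\mid\theta)$ with $\ell_i(w\mid\theta)>0$ for all $w,\theta$. In iteration $t=1,2,\dots$ agent $i$ observes $s_t^i\sim\ell_i(\cdot\mid\theta^* )$, independently across agents and iterations; $\ell_i(s_{1,t}^i\mid\theta)=\prod_{r=1}^t\ell_i(s_r^i\mid\theta)$. $D(p\|q)=\sum_w p(w)\log\frac{p(w)}{q(w)}$ is the Kullback–Leibler divergence. $\mathcal{I}_i$ is the set of incoming neighbors of agent $i$. Failure-free BFL: each agent starts with the uniform belief $\mu_0^i(\theta)=1/m$; in iteration $t$ it sends $\mu_{t-1}^i$ to its outgoing neighbors, observes $s_t^i$, receives $\mu_{t-1}^j$ from all $j\in\mathcal{I}_i$, and sets for each $\theta\in\Theta$ $$\mu_t^i(\theta)=\frac{\ell_i(s_{1,t}^i\mid\theta)\prod_{j\in\mathcal{I}_i\cup\{i\}}\mu_{t-1}^j(\theta)^{1/(|\mathcal{I}_i|+1)}}{\sum_{p=1}^m\ell_i(s_{1,t}^i\mid\theta_p)\prod_{j\in\mathcal{I}_i\cup\{i\}}\mu_{t-1}^j(\theta_p)^{1/(|\mathcal{I}_i|+1)}}.$$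 *)

theory Defs
  imports "HOL-Probability.Probability"
begin

text \<open>Incoming neighbours of agent i in the directed graph with edge set E
  (an edge (j,i) means j sends to i); self-loops are ignored.\<close>
definition in_nbrs :: "('v \<times> 'v) set \<Rightarrow> 'v \<Rightarrow> 'v set" where
  "in_nbrs E i = {j. (j, i) \<in> E \<and> j \<noteq> i}"

definition strongly_connected :: "('v \<times> 'v) set \<Rightarrow> bool" where
  "strongly_connected E \<longleftrightarrow> (\<forall>i j. (i, j) \<in> E\<^sup>*)"

definition KL :: "'s set \<Rightarrow> 's pmf \<Rightarrow> 's pmf \<Rightarrow> real" where
  "KL S p q = (\<Sum>w\<in>S. pmf p w * ln (pmf p w / pmf q w))"

definition cum_lik :: "('v \<Rightarrow> 'h \<Rightarrow> 's pmf) \<Rightarrow> (nat \<Rightarrow> 'v \<Rightarrow> 's) \<Rightarrow> nat \<Rightarrow> 'v \<Rightarrow> 'h \<Rightarrow> real" where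
  "cum_lik L x t i th = (\<Prod>r\<in>{1..t}. pmf (L i th) (x r i))"

text \<open>Failure-free BFL beliefs mu_t^i(th), given the observation sequence x (x r i = s_r^i).\<close>
primrec bfl :: "('v::finite \<times> 'v) set \<Rightarrow> ('v \<Rightarrow> 'h::finite \<Rightarrow> 's pmf) \<Rightarrow> (nat \<Rightarrow> 'v \<Rightarrow> 's)
    \<Rightarrow> nat \<Rightarrow> 'v \<Rightarrow> 'h \<Rightarrow> real" where
  "bfl E L x 0 = (\<lambda>i th. 1 / real CARD('h))"
| "bfl E L x (Suc t) = (\<lambda>i th.
     (let w = (\<lambda>p. cum_lik L x (Suc t) i p *
                 (\<Prod>j\<in>insert i (in_nbrs E i).
                     bfl E L x t j p powr (1 / real (card (in_nbrs E i) + 1))))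
      in w th / (\<Sum>p\<in>UNIV. w p)))"

end

theory Submission
  imports Defs
begin

text \<open>
  Fix a wrong hypothesis \<open>\<theta>\<close> and let \<open>\<psi> t j\<close> be the difference of the logarithms of agent
  \<open>j\<close>'s beliefs in \<open>\<theta>\<close> and in the true state \<open>\<theta>\<^sup>*\<close> at time \<open>t\<close>. Taking logarithms turns the
  BFL update into the linear recursion \<open>\<psi> (t+1) = \<Lambda> (t+1) + A \<psi> t\<close>, where \<open>A\<close> is the
  row-stochastic matrix of averaging weights and \<open>\<Lambda> k j\<close> is agent \<open>j\<close>'s log-likelihood ratio of
  \<open>\<theta>\<close> against \<open>\<theta>\<^sup>*\<close> after \<open>k\<close> signals. By Hoeffding's inequality and Borel--Cantelli,
  almost surely \<open>\<Lambda> k j \<le> (\<epsilon> - D j) k\<close> eventually, for every \<open>\<epsilon> > 0\<close>, where \<open>D j \<ge> 0\<close> is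
  agent \<open>j\<close>'s KL divergence; by hypothesis \<open>D j\<^sup>* > 0\<close> for some agent \<open>j\<^sup>*\<close>. Strong
  connectivity and the self-loops make some power \<open>A\<^sup>N\<close> entrywise positive, so in the unrolled
  recursion every input older than \<open>N\<close> steps reaches agent \<open>i\<close> through a weight \<open>\<ge> \<eta> > 0\<close> on
  \<open>j\<^sup>*\<close>. Hence \<open>\<psi> t i \<le> \<alpha> - \<beta> t\<close> with \<open>\<beta> > 0\<close>, and as the belief in \<open>\<theta>\<^sup>*\<close> is at most 1,
  the belief in \<open>\<theta>\<close> is at most \<open>exp (\<alpha> - \<beta> t)\<close>.
\<close>

section \<open>Stochastic matrices and linear recursions\<close>

definition row_stochastic :: "('v::finite \<Rightarrow> 'v \<Rightarrow> real) \<Rightarrow> bool" where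
  "row_stochastic A \<longleftrightarrow> (\<forall>i j. 0 \<le> A i j) \<and> (\<forall>i. (\<Sum>j\<in>UNIV. A i j) = 1)"

primrec matpow :: "('v::finite \<Rightarrow> 'v \<Rightarrow> real) \<Rightarrow> nat \<Rightarrow> 'v \<Rightarrow> 'v \<Rightarrow> real" where
  "matpow A 0 = (\<lambda>i j. if i = j then 1 else 0)"
| "matpow A (Suc m) = (\<lambda>i j. \<Sum>l\<in>UNIV. A i l * matpow A m l j)"

lemma row_stochastic_matpow:
  assumes "row_stochastic A" shows "row_stochastic (matpow A m)"
proof (induction m)
  case 0 show ?case by (simp add: row_stochastic_def)
next
  case (Suc m)
  have "(\<Sum>j\<in>UNIV. \<Sum>l\<in>UNIV. A i l * matpow A m l j) = (\<Sum>l\<in>UNIV. A i l * (\<Sum>j\<in>UNIV. matpow A m l j))"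
    for i by (subst sum.swap) (simp add: sum_distrib_left)
  with Suc assms show ?case
    by (auto simp: row_stochastic_def intro!: sum_nonneg)
qed

lemma matpow_add: "matpow A (a + b) i j = (\<Sum>l\<in>UNIV. matpow A a i l * matpow A b l j)"
proof (induction a arbitrary: i)
  case 0
  have "(if i = l then 1 else 0) * matpow A b l j = (if i = l then matpow A b l j else 0)" for l
    by simp
  then show ?case by simp
next
  case (Suc a)
  have "matpow A (Suc a + b) i j = (\<Sum>x\<in>UNIV. \<Sum>l\<in>UNIV. A i x * matpow A a x l * matpow A b l j)"
    by (simp add: Suc sum_distrib_left mult.assoc)
  also have "\<dots> = (\<Sum>l\<in>UNIV. (\<Sum>x\<in>UNIV. A i x * matpow A a x l) * matpow A b l j)"
    by (subst sum.swap) (simp add: sum_distrib_right)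
  finally show ?case by simp
qed

lemma row_stochastic_average_le:
  assumes "row_stochastic A" and "\<And>j. x j \<le> b"
  shows "(\<Sum>j\<in>UNIV. A i j * x j) \<le> b"
proof -
  have "(\<Sum>j\<in>UNIV. A i j * x j) \<le> (\<Sum>j\<in>UNIV. A i j * b)"
    using assms by (intro sum_mono mult_left_mono) (auto simp: row_stochastic_def)
  also have "\<dots> = b"
    using assms by (simp add: row_stochastic_def flip: sum_distrib_right)
  finally show ?thesis .
qed

lemma row_stochastic_average_le_heavy:
  assumes A: "row_stochastic A" and x: "\<And>j. x j \<le> b" and x_js: "x js \<le> b - h"
    and weight: "A i js \<ge> \<eta>" and "h \<ge> 0"
  shows "(\<Sum>j\<in>UNIV. A i j * x j) \<le> b - \<eta> * h"
proof -
  have "(\<Sum>j\<in>UNIV. A i j * x j) \<le> (\<Sum>j\<in>UNIV. A i j * (b - (if j = js then h else 0)))"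
    using A x x_js by (intro sum_mono mult_left_mono) (auto simp: row_stochastic_def)
  also have "\<dots> = (\<Sum>j\<in>UNIV. A i j) * b - A i js * h"
  proof -
    have "A i j * (b - (if j = js then h else 0)) = A i j * b - (if j = js then A i j * h else 0)"
      for j by (simp add: right_diff_distrib)
    then show ?thesis by (simp add: sum_subtractf sum_distrib_right)
  qed
  also have "\<dots> = b - A i js * h"
    using A by (simp add: row_stochastic_def)
  also have "\<dots> \<le> b - \<eta> * h"
    using weight \<open>h \<ge> 0\<close> by (simp add: mult_right_mono)
  finally show ?thesis .
qed

lemma matpow_ge_pow_of_path:
  assumes A: "row_stochastic A" and edge: "\<And>y z. (y, z) \<in> E \<Longrightarrow> A z y \<ge> \<delta>"
    and "\<delta> \<ge> 0" and "(j, i) \<in> E\<^sup>*"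
  shows "\<exists>k. matpow A k i j \<ge> \<delta> ^ k"
  using \<open>(j, i) \<in> E\<^sup>*\<close>
proof (induction rule: rtrancl_induct)
  case base show ?case by (intro exI[of _ 0]) simp
next
  case (step y z)
  then obtain k where k: "matpow A k y j \<ge> \<delta> ^ k" by blast
  have "\<delta> ^ Suc k \<le> A z y * matpow A k y j"
    using k edge[OF step(2)] \<open>\<delta> \<ge> 0\<close> by (simp add: mult_mono)
  also have "\<dots> \<le> (\<Sum>x\<in>UNIV. A z x * matpow A k x j)"
    using A row_stochastic_matpow[OF A, of k]
    by (intro member_le_sum) (auto simp: row_stochastic_def)
  finally show ?case by (intro exI[of _ "Suc k"]) simp
qed

lemma matpow_ge_pow_mono:
  assumes A: "row_stochastic A" and diag: "\<And>i. A i i \<ge> \<delta>" and "\<delta> \<ge> 0"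
    and "matpow A k i j \<ge> \<delta> ^ k" and "k \<le> m"
  shows "matpow A m i j \<ge> \<delta> ^ m"
  using \<open>k \<le> m\<close>
proof (induction m rule: dec_induct)
  case (step m)
  have "\<delta> ^ Suc m \<le> A i i * matpow A m i j"
    unfolding power_Suc using step.IH diag[of i] \<open>\<delta> \<ge> 0\<close> by (intro mult_mono) auto
  also have "\<dots> \<le> (\<Sum>x\<in>UNIV. A i x * matpow A m x j)"
    using A row_stochastic_matpow[OF A, of m]
    by (intro member_le_sum) (auto simp: row_stochastic_def)
  finally show ?case by simp
qed (use assms in simp)

lemma matpow_uniformly_positive:
  assumes A: "row_stochastic A" and diag: "\<And>i. A i i \<ge> \<delta>"
    and edge: "\<And>y z. (y, z) \<in> E \<Longrightarrow> A z y \<ge> \<delta>" and "\<delta> \<ge> 0"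
    and "strongly_connected E"
  shows "\<exists>N. \<forall>i j. matpow A N i j \<ge> \<delta> ^ N"
proof -
  have "(j, i) \<in> E\<^sup>*" for i j
    using \<open>strongly_connected E\<close> by (simp add: strongly_connected_def)
  then have "\<exists>k. matpow A k i j \<ge> \<delta> ^ k" for i j
    using matpow_ge_pow_of_path[OF A edge \<open>\<delta> \<ge> 0\<close>] by blast
  then obtain k where k: "\<And>i j. matpow A (k i j) i j \<ge> \<delta> ^ k i j" by metis
  define N where "N = Max (range (case_prod k))"
  have kN: "k i j \<le> N" for i j
    unfolding N_def by (rule Max_ge) auto
  show ?thesis
    by (intro exI[of _ N] allI matpow_ge_pow_mono[OF A diag \<open>\<delta> \<ge> 0\<close> k kN])
qed

lemma matpow_lower_bound_persists:
  assumes A: "row_stochastic A" and N: "\<And>i j. matpow A N i j \<ge> \<eta>" and "N \<le> m"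
  shows "matpow A m i j \<ge> \<eta>"
proof -
  have "matpow A m i j = (\<Sum>l\<in>UNIV. matpow A (m - N) i l * matpow A N l j)"
    using matpow_add[of A "m - N" N] \<open>N \<le> m\<close> by simp
  also have "\<dots> \<ge> (\<Sum>l\<in>UNIV. matpow A (m - N) i l * \<eta>)"
    using row_stochastic_matpow[OF A] N
    by (intro sum_mono mult_left_mono) (auto simp: row_stochastic_def)
  also have "(\<Sum>l\<in>UNIV. matpow A (m - N) i l * \<eta>) = \<eta>"
    using row_stochastic_matpow[OF A] by (simp add: row_stochastic_def flip: sum_distrib_right)
  finally show ?thesis .
qed

lemma linear_recursion_closed_form:
  assumes init: "\<And>i. \<psi> 0 i = 0"
    and step: "\<And>t i. \<psi> (Suc t) i = \<Lambda> (Suc t) i + (\<Sum>j\<in>UNIV. A i j * \<psi> t j)"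
  shows "\<psi> t i = (\<Sum>k\<in>{1..t}. \<Sum>j\<in>UNIV. matpow A (t - k) i j * \<Lambda> k j)"
proof (induction t arbitrary: i)
  case 0 show ?case by (simp add: init)
next
  case (Suc t)
  have "(\<Sum>j\<in>UNIV. A i j * \<psi> t j)
      = (\<Sum>l\<in>UNIV. \<Sum>k\<in>{1..t}. \<Sum>j\<in>UNIV. A i l * matpow A (t - k) l j * \<Lambda> k j)"
    by (simp add: Suc sum_distrib_left mult.assoc)
  also have "\<dots> = (\<Sum>k\<in>{1..t}. \<Sum>j\<in>UNIV. \<Sum>l\<in>UNIV. A i l * matpow A (t - k) l j * \<Lambda> k j)"
    by (subst sum.swap, rule sum.cong[OF refl], rule sum.swap)
  also have "\<dots> = (\<Sum>k\<in>{1..t}. \<Sum>j\<in>UNIV. matpow A (Suc t - k) i j * \<Lambda> k j)"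
    by (intro sum.cong refl) (simp add: Suc_diff_le sum_distrib_right)
  finally have "(\<Sum>j\<in>UNIV. A i j * \<psi> t j) = \<dots>" .
  moreover have "(\<Sum>j\<in>UNIV. matpow A 0 i j * \<Lambda> (Suc t) j) = \<Lambda> (Suc t) i"
  proof -
    have "matpow A 0 i j * \<Lambda> (Suc t) j = (if i = j then \<Lambda> (Suc t) j else 0)" for j
      by simp
    then show ?thesis by simp
  qed
  ultimately show ?case by (simp add: step)
qed

lemma sum_le_linear_with_exceptions:
  fixes T :: "nat \<Rightarrow> real"
  assumes T: "\<And>k. k \<in> {1..t} \<Longrightarrow>
               T k \<le> - c + (if k < K then C else 0) + (if t - N < k then D else 0)"
    and "C \<ge> 0" and "D \<ge> 0"
  shows "(\<Sum>k\<in>{1..t}. T k) \<le> - c * real t + real K * C + real N * D"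
proof -
  have count: "(\<Sum>k\<in>{1..t}. if P k then a else 0) = real (card {k\<in>{1..t}. P k}) * a"
    for P and a :: real
    using sum.inter_filter[of "{1..t}" "\<lambda>_. a" P] by simp
  have "(\<Sum>k\<in>{1..t}. T k)
      \<le> (\<Sum>k\<in>{1..t}. - c + (if k < K then C else 0) + (if t - N < k then D else 0))"
    by (rule sum_mono) (rule T)
  also have "\<dots> = - c * real t + real (card {k\<in>{1..t}. k < K}) * C
                     + real (card {k\<in>{1..t}. t - N < k}) * D"
    by (simp only: sum.distrib count) simp
  moreover have "card {k\<in>{1..t}. k < K} \<le> K"
    using card_mono[of "{..<K}" "{k\<in>{1..t}. k < K}"] by auto
  moreover have "card {k\<in>{1..t}. t - N < k} \<le> N"
  proof -
    have "card {k\<in>{1..t}. t - N < k} \<le> card {t - N<..t}"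
      by (rule card_mono) auto
    then show ?thesis by simp
  qed
  ultimately show ?thesis
    using \<open>C \<ge> 0\<close> \<open>D \<ge> 0\<close> by (smt (verit) mult_right_mono of_nat_mono)
qed

lemma matpow_weighted_input_le:
  fixes \<Lambda> :: "nat \<Rightarrow> 'v::finite \<Rightarrow> real"
  assumes A: "row_stochastic A" and N: "\<And>i j. matpow A N i j \<ge> \<eta>"
    and early: "\<And>j. k < K \<Longrightarrow> \<Lambda> k j \<le> C"
    and late: "\<And>j. K \<le> k \<Longrightarrow> \<Lambda> k j \<le> e * real k"
    and late_js: "K \<le> k \<Longrightarrow> \<Lambda> k js \<le> (e - d) * real k"
    and "k \<in> {1..t}" and "0 \<le> e" "e \<le> c" "2 * c \<le> \<eta> * d" "0 \<le> d"
  shows "(\<Sum>j\<in>UNIV. matpow A (t - k) i j * \<Lambda> k j)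
           \<le> - c + (if k < K then C + c else 0) + (if t - N < k then e * real t + c else 0)"
proof -
  note P = row_stochastic_matpow[OF A, of "t - k"]
  consider "k < K" | "K \<le> k" "t - N < k" | "K \<le> k" "k \<le> t - N" by linarith
  then show ?thesis
  proof cases
    case 1
    have "(\<Sum>j\<in>UNIV. matpow A (t - k) i j * \<Lambda> k j) \<le> C"
      using row_stochastic_average_le[OF P, of "\<Lambda> k" C] early 1 by simp
    moreover have "0 \<le> e * real t + c" using \<open>0 \<le> e\<close> \<open>e \<le> c\<close> by simp
    ultimately show ?thesis using 1 by simp
  next
    case 2
    have "(\<Sum>j\<in>UNIV. matpow A (t - k) i j * \<Lambda> k j) \<le> e * real k"
      using row_stochastic_average_le[OF P, of "\<Lambda> k" "e * real k"] late 2 by simp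
    also have "\<dots> \<le> e * real t" using \<open>k \<in> {1..t}\<close> \<open>0 \<le> e\<close> by (simp add: mult_left_mono)
    finally show ?thesis using 2 by simp
  next
    case 3
    have "matpow A (t - k) i js \<ge> \<eta>"
      using 3 \<open>k \<in> {1..t}\<close> by (intro matpow_lower_bound_persists[OF A N]) auto
    then have "(\<Sum>j\<in>UNIV. matpow A (t - k) i j * \<Lambda> k j) \<le> e * real k - \<eta> * (d * real k)"
      using late late_js 3 \<open>0 \<le> d\<close>
      by (intro row_stochastic_average_le_heavy[OF P]) (auto simp: algebra_simps)
    also have "\<dots> \<le> - (2 * c - e) * real k"
    proof -
      have "2 * c * real k \<le> \<eta> * d * real k"
        using \<open>2 * c \<le> \<eta> * d\<close> by (simp add: mult_right_mono)
      then show ?thesis by (simp add: algebra_simps)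
    qed
    also have "\<dots> \<le> - (2 * c - e) * 1"
      using \<open>k \<in> {1..t}\<close> \<open>e \<le> c\<close> \<open>0 \<le> e\<close> by (intro mult_left_mono_neg) auto
    finally show ?thesis using 3 \<open>e \<le> c\<close> by auto
  qed
qed

text \<open>
  Inputs at least \<open>N\<close> steps old reach agent \<open>i\<close> through a weight \<open>\<ge> \<eta>\<close> on \<open>js\<close>, whose
  drift \<open>-D js\<close> then dominates the growth \<open>e k\<close> permitted at the other agents once \<open>e\<close> is
  small; the finitely many early inputs and the last \<open>N\<close> ones contribute only \<open>O(1 + N e t)\<close>.
\<close>

lemma linear_recursion_linear_decay:
  fixes \<Lambda> :: "nat \<Rightarrow> 'v::finite \<Rightarrow> real"
  assumes A: "row_stochastic A" and N: "\<And>i j. matpow A N i j \<ge> \<eta>" and "\<eta> > 0"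
    and init: "\<And>i. \<psi> 0 i = 0"
    and step: "\<And>t i. \<psi> (Suc t) i = \<Lambda> (Suc t) i + (\<Sum>j\<in>UNIV. A i j * \<psi> t j)"
    and drift: "\<And>j e. e > 0 \<Longrightarrow> eventually (\<lambda>k. \<Lambda> k j \<le> (- D j + e) * real k) sequentially"
    and D: "\<And>j. D j \<ge> 0" and "D js > 0"
  shows "\<exists>\<alpha> \<beta>. \<beta> > 0 \<and> (\<forall>t. \<psi> t i \<le> \<alpha> - \<beta> * real t)"
proof -
  define c where "c = \<eta> * D js / 2"
  define e where "e = c / (real N + 1)"
  have "c > 0" "e > 0" "e \<le> c"
    using \<open>\<eta> > 0\<close> \<open>D js > 0\<close> by (auto simp: c_def e_def divide_le_eq)
  have "eventually (\<lambda>k. \<forall>j. \<Lambda> k j \<le> (- D j + e) * real k) sequentially"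
    using drift[OF \<open>e > 0\<close>] by (rule eventually_all_finite)
  then obtain K where K: "\<And>k j. k \<ge> K \<Longrightarrow> \<Lambda> k j \<le> (- D j + e) * real k"
    by (auto simp: eventually_sequentially)
  have late: "\<Lambda> k j \<le> e * real k" if "k \<ge> K" for k j
    using K[OF that, of j] D[of j] by (smt (verit) mult_right_mono of_nat_0_le_iff)
  define C where "C = (\<Sum>k<K. \<Sum>j\<in>UNIV. \<bar>\<Lambda> k j\<bar>)"
  have early: "\<Lambda> k j \<le> C" if "k < K" for k j
  proof -
    have "\<Lambda> k j \<le> (\<Sum>j\<in>UNIV. \<bar>\<Lambda> k j\<bar>)"
      using member_le_sum[of j UNIV "\<lambda>j. \<bar>\<Lambda> k j\<bar>"] by simp
    also have "\<dots> \<le> C"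
      unfolding C_def using that by (intro member_le_sum) (auto intro: sum_nonneg)
    finally show ?thesis .
  qed
  have "C \<ge> 0" unfolding C_def by (intro sum_nonneg) auto
  have "\<psi> t i \<le> - c * real t + real K * (C + c) + real N * (e * real t + c)" for t
    unfolding linear_recursion_closed_form[OF init step]
  proof (rule sum_le_linear_with_exceptions)
    fix k assume "k \<in> {1..t}"
    then show "(\<Sum>j\<in>UNIV. matpow A (t - k) i j * \<Lambda> k j)
        \<le> - c + (if k < K then C + c else 0) + (if t - N < k then e * real t + c else 0)"
      using K[of k js] \<open>e > 0\<close> \<open>e \<le> c\<close> \<open>D js > 0\<close> \<open>\<eta> > 0\<close>
      by (intro matpow_weighted_input_le[OF A N early late, where d = "D js"]) (auto simp: c_def)
  qed (use \<open>C \<ge> 0\<close> \<open>c > 0\<close> \<open>e > 0\<close> in auto)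
  moreover have "- c * real t + real K * (C + c) + real N * (e * real t + c)
      = (real K * (C + c) + real N * c) - (c - real N * e) * real t" for t
    by (simp add: algebra_simps)
  moreover have "c - real N * e > 0"
    using \<open>c > 0\<close> by (simp add: e_def field_simps)
  ultimately show ?thesis by metis
qed

lemma exp_minus_linear_tendsto_0:
  assumes "\<beta> > 0"
  shows "(\<lambda>t. exp (\<alpha> - \<beta> * real t)) \<longlonglongrightarrow> 0"
proof -
  have "exp (- \<beta>) ^ t = exp (- (\<beta> * real t))" for t
    by (simp add: exp_of_nat_mult[symmetric] mult.commute)
  then have "exp (\<alpha> - \<beta> * real t) = exp \<alpha> * exp (- \<beta>) ^ t" for t
    by (simp add: exp_diff exp_minus field_simps)
  moreover have "(\<lambda>t. exp \<alpha> * exp (- \<beta>) ^ t) \<longlonglongrightarrow> exp \<alpha> * 0"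
    using assms by (intro tendsto_mult_left LIMSEQ_power_zero) simp_all
  ultimately show ?thesis by simp
qed

section \<open>The BFL update in logarithmic form\<close>

definition bfl_weight :: "('v::finite \<times> 'v) set \<Rightarrow> 'v \<Rightarrow> 'v \<Rightarrow> real" where
  "bfl_weight E i j =
     (if j \<in> insert i (in_nbrs E i) then 1 / real (card (in_nbrs E i) + 1) else 0)"

definition log_lik_ratio ::
    "('v \<Rightarrow> 'h \<Rightarrow> 's pmf) \<Rightarrow> (nat \<Rightarrow> 'v \<Rightarrow> 's) \<Rightarrow> 'h \<Rightarrow> 'h \<Rightarrow> nat \<Rightarrow> 'v \<Rightarrow> real" where
  "log_lik_ratio L x th th' k j = (\<Sum>r\<in>{1..k}. ln (pmf (L j th) (x r j)) - ln (pmf (L j th') (x r j)))"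

lemma sum_bfl_weight:
  "(\<Sum>j\<in>UNIV. bfl_weight E i j * g j) = (\<Sum>j\<in>insert i (in_nbrs E i). g j) / real (card (in_nbrs E i) + 1)"
proof -
  let ?r = "real (card (in_nbrs E i) + 1)"
  have "(\<Sum>j\<in>UNIV. bfl_weight E i j * g j)
      = (\<Sum>j\<in>UNIV. if j \<in> insert i (in_nbrs E i) then g j / ?r else 0)"
    by (rule sum.cong) (simp_all add: bfl_weight_def)
  also have "\<dots> = (\<Sum>j\<in>insert i (in_nbrs E i). g j / ?r)"
    by (subst sum.inter_restrict[symmetric]) simp_all
  finally show ?thesis by (simp add: sum_divide_distrib)
qed

lemma row_stochastic_bfl_weight: "row_stochastic (bfl_weight E)"
proof -
  have "card (insert i (in_nbrs E i)) = card (in_nbrs E i) + 1" for i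
    by (simp add: in_nbrs_def)
  then show ?thesis
    using sum_bfl_weight[of E _ "\<lambda>_. 1"] by (simp add: row_stochastic_def bfl_weight_def)
qed

lemma bfl_weight_ge:
  fixes E :: "('v::finite \<times> 'v) set"
  assumes "j \<in> insert i (in_nbrs E i)"
  shows "bfl_weight E i j \<ge> 1 / real CARD('v)"
proof -
  have "card (in_nbrs E i) + 1 = card (insert i (in_nbrs E i))"
    by (simp add: in_nbrs_def)
  also have "\<dots> \<le> CARD('v)"
    by (rule card_mono) simp_all
  finally show ?thesis
    using assms by (simp add: bfl_weight_def frac_le)
qed

definition bfl_unnormalized ::
    "('v::finite \<times> 'v) set \<Rightarrow> ('v \<Rightarrow> 'h::finite \<Rightarrow> 's pmf) \<Rightarrow> (nat \<Rightarrow> 'v \<Rightarrow> 's)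
     \<Rightarrow> nat \<Rightarrow> 'v \<Rightarrow> 'h \<Rightarrow> real" where
  "bfl_unnormalized E L x t i q = cum_lik L x (Suc t) i q *
     (\<Prod>j\<in>insert i (in_nbrs E i). bfl E L x t j q powr (1 / real (card (in_nbrs E i) + 1)))"

lemma bfl_Suc_eq:
  "bfl E L x (Suc t) i q = bfl_unnormalized E L x t i q / (\<Sum>p\<in>UNIV. bfl_unnormalized E L x t i p)"
  by (simp add: bfl_unnormalized_def Let_def)

context
  fixes E :: "('v::finite \<times> 'v) set" and L :: "'v \<Rightarrow> 'h::finite \<Rightarrow> 's pmf"
    and x :: "nat \<Rightarrow> 'v \<Rightarrow> 's"
  assumes pos: "\<And>r j p. pmf (L j p) (x r j) > 0"
begin

lemma bfl_unnormalized_pos: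
  assumes "\<And>j p. bfl E L x t j p > 0"
  shows "bfl_unnormalized E L x t i q > 0"
  using pos assms assms[THEN dual_order.strict_implies_not_eq]
  by (auto simp: bfl_unnormalized_def cum_lik_def intro!: prod_pos mult_pos_pos)

lemma bfl_pos: "bfl E L x t i p > 0"
proof (induction t arbitrary: i p)
  case (Suc t)
  then show ?case
    using bfl_unnormalized_pos unfolding bfl_Suc_eq by (simp add: sum_pos)
qed simp

lemma bfl_le_1: "bfl E L x t i p \<le> 1"
proof -
  have "(\<Sum>q\<in>UNIV. bfl E L x t i q) = 1"
  proof (cases t)
    case (Suc t')
    have "(\<Sum>q\<in>UNIV. bfl_unnormalized E L x t' i q) > 0"
      using bfl_unnormalized_pos[OF bfl_pos] by (simp add: sum_pos)
    then show ?thesis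
      unfolding Suc bfl_Suc_eq by (simp flip: sum_divide_distrib)
  qed simp
  then show ?thesis
    using bfl_pos member_le_sum[of p UNIV "bfl E L x t i"] by (simp add: less_imp_le)
qed

lemma ln_bfl_ratio_step:
  "ln (bfl E L x (Suc t) i th) - ln (bfl E L x (Suc t) i th')
     = log_lik_ratio L x th th' (Suc t) i
       + (\<Sum>j\<in>UNIV. bfl_weight E i j * (ln (bfl E L x t j th) - ln (bfl E L x t j th')))"
proof -
  let ?w = "bfl_unnormalized E L x t i"
  have w_pos: "?w q > 0" for q
    by (rule bfl_unnormalized_pos[OF bfl_pos])
  then have "(\<Sum>q\<in>UNIV. ?w q) \<noteq> 0" "?w q \<noteq> 0" for q
    by (simp_all add: sum_pos dual_order.strict_implies_not_eq)
  have "bfl E L x t j q \<noteq> 0" "pmf (L j q) (x r j) \<noteq> 0" for j q r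
    using bfl_pos pos by (auto simp: dual_order.strict_implies_not_eq)
  then have ln_w: "ln (?w q) = (\<Sum>r\<in>{1..Suc t}. ln (pmf (L i q) (x r i)))
                         + (\<Sum>j\<in>UNIV. bfl_weight E i j * ln (bfl E L x t j q))" for q
    using bfl_pos pos
    by (simp add: bfl_unnormalized_def cum_lik_def ln_mult prod_pos ln_prod
                  sum_bfl_weight sum_divide_distrib)
  have "ln (bfl E L x (Suc t) i th) - ln (bfl E L x (Suc t) i th') = ln (?w th) - ln (?w th')"
    unfolding bfl_Suc_eq using \<open>(\<Sum>q\<in>UNIV. ?w q) \<noteq> 0\<close> \<open>?w th \<noteq> 0\<close> \<open>?w th' \<noteq> 0\<close>
    by (simp add: ln_div)
  then show ?thesis
    by (simp add: ln_w log_lik_ratio_def sum_subtractf right_diff_distrib)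
qed

lemma bfl_le_exp_if_ln_ratio_le:
  assumes "ln (bfl E L x t i th) - ln (bfl E L x t i th') \<le> a"
  shows "bfl E L x t i th \<le> exp a"
proof -
  have "ln (bfl E L x t i th') \<le> 0"
    using bfl_pos bfl_le_1 by simp
  with assms have "ln (bfl E L x t i th) \<le> a" by simp
  then show ?thesis
    using bfl_pos by (metis exp_le_cancel_iff exp_ln)
qed

lemma bfl_tendsto_0_if_log_lik_ratio_drifts:
  assumes "strongly_connected E"
    and drift: "\<And>j e. e > 0 \<Longrightarrow>
          eventually (\<lambda>k. log_lik_ratio L x th th' k j \<le> (- D j + e) * real k) sequentially"
    and "\<And>j. D j \<ge> 0" and "D js > 0"
  shows "(\<lambda>t. bfl E L x t i th) \<longlonglongrightarrow> 0"
proof -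
  define \<delta> :: real where "\<delta> = 1 / real CARD('v)"
  have "\<delta> > 0" by (simp add: \<delta>_def)
  have diag: "bfl_weight E k k \<ge> \<delta>" for k
    unfolding \<delta>_def by (rule bfl_weight_ge) simp
  have edge: "bfl_weight E z y \<ge> \<delta>" if "(y, z) \<in> E" for y z
    unfolding \<delta>_def by (rule bfl_weight_ge) (use that in \<open>auto simp: in_nbrs_def\<close>)
  have "\<exists>N. \<forall>i j. matpow (bfl_weight E) N i j \<ge> \<delta> ^ N"
    using \<open>\<delta> > 0\<close> \<open>strongly_connected E\<close>
    by (intro matpow_uniformly_positive[OF row_stochastic_bfl_weight diag edge]) auto
  then obtain N where N: "\<And>i j. matpow (bfl_weight E) N i j \<ge> \<delta> ^ N" by blast
  define \<psi> where "\<psi> t j = ln (bfl E L x t j th) - ln (bfl E L x t j th')" for t j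
  have \<psi>_0: "\<psi> 0 j = 0" for j by (simp add: \<psi>_def)
  have \<psi>_Suc: "\<psi> (Suc t) j = log_lik_ratio L x th th' (Suc t) j
                              + (\<Sum>l\<in>UNIV. bfl_weight E j l * \<psi> t l)" for t j
    unfolding \<psi>_def by (rule ln_bfl_ratio_step)
  have "\<exists>\<alpha> \<beta>. \<beta> > 0 \<and> (\<forall>t. \<psi> t i \<le> \<alpha> - \<beta> * real t)"
    using \<open>\<delta> > 0\<close>
    by (intro linear_recursion_linear_decay[OF row_stochastic_bfl_weight N _ \<psi>_0 \<psi>_Suc drift])
       (use assms in simp_all)
  then obtain \<alpha> \<beta> where "\<beta> > 0" and \<psi>_le: "\<And>t. \<psi> t i \<le> \<alpha> - \<beta> * real t" by blast
  have upper: "bfl E L x t i th \<le> exp (\<alpha> - \<beta> * real t)" for t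
    using \<psi>_le[of t] unfolding \<psi>_def by (rule bfl_le_exp_if_ln_ratio_le)
  have lim: "(\<lambda>t. exp (\<alpha> - \<beta> * real t)) \<longlonglongrightarrow> 0"
    using \<open>\<beta> > 0\<close> by (rule exp_minus_linear_tendsto_0)
  have nonneg: "0 \<le> bfl E L x t i th" for t
    using bfl_pos less_imp_le by blast
  show ?thesis
    by (rule tendsto_sandwich[OF _ _ tendsto_const lim]) (auto intro: always_eventually upper nonneg)
qed

end

section \<open>Almost sure drift of the log-likelihood ratios\<close>

lemma KL_nonneg:
  assumes "finite S" and p: "set_pmf p = S" and q: "set_pmf q = S"
  shows "KL S p q \<ge> 0"
proof -
  have "pmf p w - pmf q w \<le> pmf p w * ln (pmf p w / pmf q w)" if "w \<in> S" for w
  proof -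
    have "pmf p w > 0" "pmf q w > 0"
      using that p q by (auto simp: pmf_positive)
    then have "ln (pmf q w / pmf p w) \<le> pmf q w / pmf p w - 1"
      by (intro ln_le_minus_one) simp
    with \<open>pmf p w > 0\<close> \<open>pmf q w > 0\<close> show ?thesis
      by (simp add: ln_div field_simps)
  qed
  then have "(\<Sum>w\<in>S. pmf p w - pmf q w) \<le> KL S p q"
    unfolding KL_def by (rule sum_mono)
  moreover have "(\<Sum>w\<in>S. pmf p w) = 1" "(\<Sum>w\<in>S. pmf q w) = 1"
    using sum_pmf_eq_1[OF \<open>finite S\<close> equalityD1[OF p]] sum_pmf_eq_1[OF \<open>finite S\<close> equalityD1[OF q]]
    by simp_all
  then have "(\<Sum>w\<in>S. pmf p w - pmf q w) = 0"
    by (simp add: sum_subtractf)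
  ultimately show ?thesis by simp
qed

lemma expectation_log_ratio_eq_neg_KL:
  assumes "finite S" and p: "set_pmf p = S" and q: "set_pmf q = S"
  shows "measure_pmf.expectation p (\<lambda>w. ln (pmf q w) - ln (pmf p w)) = - KL S p q"
proof -
  have "measure_pmf.expectation p (\<lambda>w. ln (pmf q w) - ln (pmf p w))
      = (\<Sum>w\<in>S. (ln (pmf q w) - ln (pmf p w)) * pmf p w)"
    using assms by (intro integral_measure_pmf_real) auto
  also have "\<dots> = (\<Sum>w\<in>S. - (pmf p w * ln (pmf p w / pmf q w)))"
  proof (rule sum.cong[OF refl])
    fix w assume "w \<in> S"
    then have "pmf p w > 0" "pmf q w > 0"
      using p q by (auto simp: pmf_positive)
    then show "(ln (pmf q w) - ln (pmf p w)) * pmf p w = - (pmf p w * ln (pmf p w / pmf q w))"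
      by (simp add: ln_div algebra_simps)
  qed
  finally show ?thesis by (simp add: KL_def sum_negf)
qed

lemma AE_eventually_le_for_all_pos:
  fixes g :: "nat \<Rightarrow> 'a \<Rightarrow> real"
  assumes "\<And>e. e > 0 \<Longrightarrow> AE x in M. eventually (\<lambda>k. g k x \<le> (a + e) * real k) sequentially"
  shows "AE x in M. \<forall>e>0. eventually (\<lambda>k. g k x \<le> (a + e) * real k) sequentially"
proof -
  have "AE x in M. \<forall>n. eventually (\<lambda>k. g k x \<le> (a + inverse (real (Suc n))) * real k) sequentially"
    by (subst AE_all_countable) (simp add: assms)
  then show ?thesis
  proof (rule eventually_mono, intro allI impI)
    fix x and e :: real
    assume H: "\<forall>n. eventually (\<lambda>k. g k x \<le> (a + inverse (real (Suc n))) * real k) sequentially"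
      and "e > 0"
    then obtain n where n: "inverse (real (Suc n)) < e"
      using reals_Archimedean by blast
    show "eventually (\<lambda>k. g k x \<le> (a + e) * real k) sequentially"
      using H[rule_format, of n]
    proof (rule eventually_mono)
      fix k assume "g k x \<le> (a + inverse (real (Suc n))) * real k"
      also have "\<dots> \<le> (a + e) * real k" using n by (intro mult_right_mono) auto
      finally show "g k x \<le> (a + e) * real k" .
    qed
  qed
qed

context prob_space
begin

lemma indep_sets_reindex:
  assumes inj: "inj_on f I" and indep: "indep_sets F (f ` I)"
  shows "indep_sets (\<lambda>i. F (f i)) I"
proof (rule indep_setsI)
  show "F (f i) \<subseteq> events" if "i \<in> I" for i
    using that indep unfolding indep_sets_def by blast
  fix A J assume J: "J \<noteq> {}" "J \<subseteq> I" "finite J" and A: "\<forall>j\<in>J. A j \<in> F (f j)"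
  have injJ: "inj_on f J" using inj J by (auto intro: inj_on_subset)
  define A' where "A' = A \<circ> the_inv_into J f"
  have A'f: "A' (f j) = A j" if "j \<in> J" for j
    using that injJ by (simp add: A'_def the_inv_into_f_f)
  have "prob (\<Inter>j\<in>f ` J. A' j) = (\<Prod>j\<in>f ` J. prob (A' j))"
    by (rule indep_setsD[OF indep]) (use J A A'f in auto)
  then show "prob (\<Inter>j\<in>J. A j) = (\<Prod>j\<in>J. prob (A j))"
    using injJ A'f by (simp add: prod.reindex)
qed

lemma indep_vars_reindex:
  assumes "inj_on f I" and "indep_vars N X (f ` I)"
  shows "indep_vars (\<lambda>i. N (f i)) (\<lambda>i. X (f i)) I"
  using assms indep_sets_reindex unfolding indep_vars_def by fastforce

lemma iid_bounded_sum_deviation_le: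
  fixes X :: "nat \<Rightarrow> 'a \<Rightarrow> real"
  assumes indep: "indep_vars (\<lambda>_. borel) X UNIV"
    and ident: "\<And>r. distr M borel (X r) = distr M borel (X 0)"
    and bounded: "\<And>r \<omega>. \<bar>X r \<omega>\<bar> \<le> B" and "e > 0" and "n > 0"
  shows "prob {\<omega> \<in> space M. (\<Sum>r\<in>{1..n}. X r \<omega>) \<ge> real n * expectation (X 0) + e * real n}
           \<le> exp (-2 * e\<^sup>2 / (2 * B + 2)\<^sup>2) ^ n"
proof -
  have [measurable]: "random_variable borel (X r)" for r
    using indep unfolding indep_vars_def by auto
  have "B \<ge> 0" using bounded[of 0 undefined] by simp
  interpret Hoeffding_ineq_iid M "{1..n}" X "X 0" "- B - 1" "B + 1" "expectation (X 0)"
  proof unfold_locales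
    have "X 0 \<omega> \<in> {- B - 1..B + 1}" for \<omega>
      using bounded[of 0 \<omega>] by (simp add: abs_le_iff)
    then show "AE \<omega> in M. X 0 \<omega> \<in> {- B - 1..B + 1}" by simp
  qed (auto intro: indep_vars_subset[OF indep] ident)
  have "prob {\<omega> \<in> space M. (\<Sum>r\<in>{1..n}. X r \<omega>) \<ge> real n * expectation (X 0) + e * real n}
      \<le> exp (-2 * (e * real n)\<^sup>2 / (real n * (B + 1 - (- B - 1))\<^sup>2))"
    using Hoeffding_ineq_ge[of "e * real n"] \<open>B \<ge> 0\<close> \<open>e > 0\<close> \<open>n > 0\<close> by simp
  also have "-2 * (e * real n)\<^sup>2 / (real n * (B + 1 - (- B - 1))\<^sup>2)
      = real n * (-2 * e\<^sup>2 / (2 * B + 2)\<^sup>2)"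
  proof -
    have "-2 * (e * m)\<^sup>2 / (m * c) = m * (-2 * e\<^sup>2 / c)" if "m > 0" for m c :: real
      using that by (simp add: power2_eq_square)
    moreover have "B + 1 - (- B - 1) = 2 * B + 2" by simp
    ultimately show ?thesis using \<open>n > 0\<close> by simp
  qed
  finally show ?thesis by (simp only: exp_of_nat_mult)
qed

lemma iid_bounded_sums_eventually_le:
  fixes X :: "nat \<Rightarrow> 'a \<Rightarrow> real"
  assumes indep: "indep_vars (\<lambda>_. borel) X UNIV"
    and ident: "\<And>r. distr M borel (X r) = distr M borel (X 0)"
    and bounded: "\<And>r \<omega>. \<bar>X r \<omega>\<bar> \<le> B" and "e > 0"
  shows "AE \<omega> in M. eventually
           (\<lambda>k. (\<Sum>r\<in>{1..k}. X r \<omega>) \<le> (expectation (X 0) + e) * real k) sequentially"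
proof -
  have [measurable]: "random_variable borel (X r)" for r
    using indep unfolding indep_vars_def by auto
  define q where "q = exp (-2 * e\<^sup>2 / (2 * B + 2)\<^sup>2)"
  define Dev where "Dev k = {\<omega> \<in> space M.
      (\<Sum>r\<in>{1..Suc k}. X r \<omega>) \<ge> real (Suc k) * expectation (X 0) + e * real (Suc k)}" for k
  have Dev_le: "prob (Dev k) \<le> q ^ Suc k" for k
    unfolding Dev_def q_def by (rule iid_bounded_sum_deviation_le[OF indep ident bounded \<open>e > 0\<close>]) simp
  have "summable (\<lambda>k. q ^ Suc k)"
    using \<open>e > 0\<close> bounded[of 0 undefined] by (simp add: q_def)
  then have "summable (\<lambda>k. prob (Dev k))"
    by (rule summable_comparison_test[rotated]) (use Dev_le in auto)
  then have "AE \<omega> in M. eventually (\<lambda>k. \<omega> \<in> space M - Dev k) sequentially"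
    by (intro borel_cantelli_AE1) (auto simp: Dev_def emeasure_eq_measure)
  then show ?thesis
  proof (rule eventually_mono)
    fix \<omega> assume "eventually (\<lambda>k. \<omega> \<in> space M - Dev k) sequentially"
    then have "eventually (\<lambda>k. (\<Sum>r\<in>{1..Suc k}. X r \<omega>) \<le> (expectation (X 0) + e) * real (Suc k))
        sequentially"
    proof (rule eventually_mono)
      fix k assume "\<omega> \<in> space M - Dev k"
      then have "\<not> real (Suc k) * expectation (X 0) + e * real (Suc k) \<le> (\<Sum>r\<in>{1..Suc k}. X r \<omega>)"
        by (simp add: Dev_def del: of_nat_Suc)
      then show "(\<Sum>r\<in>{1..Suc k}. X r \<omega>) \<le> (expectation (X 0) + e) * real (Suc k)"
        using distrib_right[of "expectation (X 0)" e "real (Suc k)"] by (simp add: mult.commute)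
    qed
    then show "eventually (\<lambda>k. (\<Sum>r\<in>{1..k}. X r \<omega>) \<le> (expectation (X 0) + e) * real k) sequentially"
      by (subst eventually_sequentially_Suc[symmetric])
  qed
qed

lemma log_lik_ratio_eventually_le:
  fixes s :: "nat \<Rightarrow> 'v \<Rightarrow> 'a \<Rightarrow> 's" and L :: "'v \<Rightarrow> 'h \<Rightarrow> 's pmf"
  assumes indep: "indep_vars (\<lambda>_. count_space UNIV) (\<lambda>(t, i). s t i) UNIV"
    and distr: "\<And>t. distr M (count_space UNIV) (s t j) = measure_pmf (L j \<theta>)"
    and "finite S" and supp: "\<And>th. set_pmf (L j th) = S" and "e > 0"
  shows "AE \<omega> in M. eventually (\<lambda>k. log_lik_ratio L (\<lambda>r j. s r j \<omega>) th \<theta> k j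
                                    \<le> (- KL S (L j \<theta>) (L j th) + e) * real k) sequentially"
proof -
  define f where "f w = ln (pmf (L j th) w) - ln (pmf (L j \<theta>) w)" for w
  define X where "X = (\<lambda>r \<omega>. f (s r j \<omega>))"
  have [measurable]: "s t i \<in> measurable M (count_space UNIV)" for t i
    using indep unfolding indep_vars_def by auto
  have "indep_vars (\<lambda>_. borel) (\<lambda>p \<omega>. f ((\<lambda>(t, i). s t i) p \<omega>)) ((\<lambda>r. (r, j)) ` UNIV)"
    by (rule indep_vars_subset[OF indep_vars_compose2[OF indep]]) auto
  then have "indep_vars (\<lambda>_. borel) (\<lambda>r \<omega>. f ((\<lambda>(t, i). s t i) (r, j) \<omega>)) UNIV"
    by (rule indep_vars_reindex[rotated]) (simp add: inj_on_def)
  then have indep_X: "indep_vars (\<lambda>_. borel) X UNIV"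
    by (simp add: X_def)
  have distr_X: "distr M borel (X r) = distr (measure_pmf (L j \<theta>)) borel f" for r
  proof -
    have "distr M borel (X r) = distr (distr M (count_space UNIV) (s r j)) borel f"
      by (subst distr_distr) (auto simp: X_def comp_def)
    then show ?thesis by (simp add: distr)
  qed
  have ident: "distr M borel (X r) = distr M borel (X 0)" for r
    by (simp only: distr_X)
  have bounded: "\<bar>X r \<omega>\<bar> \<le> (\<Sum>w\<in>S. \<bar>f w\<bar>)" for r \<omega>
  proof (cases "s r j \<omega> \<in> S")
    case True
    then show ?thesis
      unfolding X_def using \<open>finite S\<close> by (intro member_le_sum) auto
  next
    case False
    then have "pmf (L j q) (s r j \<omega>) = 0" for q
      by (metis set_pmf_iff supp)
    then have "X r \<omega> = 0" by (simp add: X_def f_def)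
    then show ?thesis by (simp add: sum_nonneg)
  qed
  have "expectation (X 0) = integral\<^sup>L (distr M borel (X 0)) (\<lambda>x. x)"
    using indep_X unfolding indep_vars_def by (intro integral_distr[symmetric]) auto
  also have "\<dots> = integral\<^sup>L (distr (measure_pmf (L j \<theta>)) borel f) (\<lambda>x. x)"
    by (simp only: distr_X)
  also have "\<dots> = measure_pmf.expectation (L j \<theta>) f"
    by (rule integral_distr) auto
  also have "\<dots> = - KL S (L j \<theta>) (L j th)"
    unfolding f_def using \<open>finite S\<close> supp[of \<theta>] supp[of th] by (rule expectation_log_ratio_eq_neg_KL)
  finally have expectation_X: "expectation (X 0) = - KL S (L j \<theta>) (L j th)" .
  have sums: "(\<Sum>r\<in>{1..k}. X r \<omega>) = log_lik_ratio L (\<lambda>r j. s r j \<omega>) th \<theta> k j" for k \<omega>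
    by (simp add: log_lik_ratio_def X_def f_def)
  show ?thesis
    using iid_bounded_sums_eventually_le[OF indep_X ident bounded \<open>e > 0\<close>]
    unfolding sums expectation_X .
qed

lemma AE_signals_in_support:
  fixes s :: "nat \<Rightarrow> 'v::finite \<Rightarrow> 'a \<Rightarrow> 's"
  assumes indep: "indep_vars (\<lambda>_. count_space UNIV) (\<lambda>(t, i). s t i) UNIV"
    and distr: "\<And>t i. distr M (count_space UNIV) (s t i) = measure_pmf (L i \<theta>)"
    and supp: "\<And>i. set_pmf (L i \<theta>) = S i"
  shows "AE \<omega> in M. \<forall>t i. s t i \<omega> \<in> S i"
proof -
  have [measurable]: "s t i \<in> measurable M (count_space UNIV)" for t i
    using indep unfolding indep_vars_def by auto
  have "AE \<omega> in M. s t i \<omega> \<in> S i" for t i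
  proof -
    have "AE x in distr M (count_space UNIV) (s t i). x \<in> S i"
      unfolding distr using supp by (simp add: AE_measure_pmf_iff)
    then show ?thesis by (subst (asm) AE_distr_iff) auto
  qed
  then have "AE \<omega> in M. \<forall>i\<in>UNIV. s t i \<omega> \<in> S i" for t
    by (intro AE_finite_allI) simp_all
  then have "\<forall>t. AE \<omega> in M. \<forall>i. s t i \<omega> \<in> S i" by simp
  then show ?thesis by (rule AE_all_countable[where P = "\<lambda>t \<omega>. \<forall>i. s t i \<omega> \<in> S i", THEN iffD2])
qed

lemma AE_log_lik_ratio_drift:
  fixes s :: "nat \<Rightarrow> 'v::finite \<Rightarrow> 'a \<Rightarrow> 's"
  assumes indep: "indep_vars (\<lambda>_. count_space UNIV) (\<lambda>(t, i). s t i) UNIV"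
    and distr: "\<And>t i. distr M (count_space UNIV) (s t i) = measure_pmf (L i \<theta>)"
    and finite: "\<And>i. finite (S i)" and supp: "\<And>i th. set_pmf (L i th) = S i"
  shows "AE \<omega> in M. \<forall>j. \<forall>e>0. eventually (\<lambda>k. log_lik_ratio L (\<lambda>r j. s r j \<omega>) th \<theta> k j
                              \<le> (- KL (S j) (L j \<theta>) (L j th) + e) * real k) sequentially"
proof -
  have "AE \<omega> in M. \<forall>e>0. eventually (\<lambda>k. log_lik_ratio L (\<lambda>r j. s r j \<omega>) th \<theta> k j
                              \<le> (- KL (S j) (L j \<theta>) (L j th) + e) * real k) sequentially" for j
    by (rule AE_eventually_le_for_all_pos,
        rule log_lik_ratio_eventually_le[where L = L and j = j and \<theta> = \<theta>, OF indep distr finite supp])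
  then have "AE \<omega> in M. \<forall>j\<in>UNIV. \<forall>e>0. eventually (\<lambda>k. log_lik_ratio L (\<lambda>r j. s r j \<omega>) th \<theta> k j
                              \<le> (- KL (S j) (L j \<theta>) (L j th) + e) * real k) sequentially"
    by (intro AE_finite_allI) simp_all
  then show ?thesis by simp
qed

end

theorem corollary2:
  fixes M :: "'a measure"
    and E :: "('v::finite \<times> 'v) set"
    and S :: "'v \<Rightarrow> 's set"
    and L :: "'v \<Rightarrow> 'h::finite \<Rightarrow> 's pmf"
    and \<theta>s :: 'h
    and s :: "nat \<Rightarrow> 'v \<Rightarrow> 'a \<Rightarrow> 's"
  assumes "prob_space M"
    and "strongly_connected E"
    and "\<And>i. finite (S i)"
    and "\<And>i th. set_pmf (L i th) = S i"
    and "\<And>th. th \<noteq> \<theta>s \<Longrightarrow> (\<Sum>j\<in>UNIV. KL (S j) (L j \<theta>s) (L j th)) \<noteq> 0"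
    and "prob_space.indep_vars M (\<lambda>_. count_space UNIV) (\<lambda>(t, i). s t i) UNIV"
    and "\<And>t i. distr M (count_space UNIV) (s t i) = measure_pmf (L i \<theta>s)"
  shows "\<forall>i th. th \<noteq> \<theta>s \<longrightarrow>
           (AE \<omega> in M. (\<lambda>t. bfl E L (\<lambda>r j. s r j \<omega>) t i th) \<longlonglongrightarrow> 0)"
proof (intro allI impI)
  fix i th assume "th \<noteq> \<theta>s"
  interpret prob_space M by fact
  let ?D = "\<lambda>j. KL (S j) (L j \<theta>s) (L j th)"
  have D_nonneg: "?D j \<ge> 0" for j
    by (rule KL_nonneg[OF assms(3) assms(4) assms(4)])
  obtain js where "?D js \<noteq> 0"
    using assms(5)[OF \<open>th \<noteq> \<theta>s\<close>] by (meson sum.neutral)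
  with D_nonneg have "?D js > 0" by (simp add: order_less_le)
  have "AE \<omega> in M. \<forall>j. \<forall>e>0. eventually (\<lambda>k. log_lik_ratio L (\<lambda>r j. s r j \<omega>) th \<theta>s k j
                              \<le> (- ?D j + e) * real k) sequentially"
    by (rule AE_log_lik_ratio_drift[where L = L and \<theta> = \<theta>s, OF assms(6) assms(7) assms(3) assms(4)])
  moreover have "AE \<omega> in M. \<forall>t j. s t j \<omega> \<in> S j"
    by (rule AE_signals_in_support[where L = L and \<theta> = \<theta>s, OF assms(6) assms(7) assms(4)])
  ultimately show "AE \<omega> in M. (\<lambda>t. bfl E L (\<lambda>r j. s r j \<omega>) t i th) \<longlonglongrightarrow> 0"
  proof eventually_elim
    case (elim \<omega>)
    then have pos: "pmf (L j p) (s r j \<omega>) > 0" for r j p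
      using assms(4) by (metis pmf_positive)
    show ?case
      by (rule bfl_tendsto_0_if_log_lik_ratio_drifts[where L = L and x = "\<lambda>r j. s r j \<omega>" and D = ?D,
            OF pos assms(2) _ D_nonneg \<open>?D js > 0\<close>])
         (use elim in blast)
  qed
qed

end
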